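(* Fix $d\ge0$ and for a unit vector $z\in\mathbb{S}^{n-1}$ let $\mathrm{slab}_z(x)=\mathbf{1}[-d\le z\cdot x\le d]$. If $z,z'\in\mathbb{S}^{n-1}$ satisfy $0<\|z-z'\|_2\le 1/3$, then \[ \Pr_{\mathbf{x}\sim N(0,I_n)}[\mathrm{slab}_z(\mathbf{x})\ne\mathrm{slab}_{z'}(\mathbf{x})]\le 5\|z-z'\|_2\sqrt{\ln\!\Big(\frac{1}{\|z-z'\|_2}\Big)} . \]
   Context: $N(0,I_n)$ is the standard Gaussian distribution on $\mathbb{R}^n$. *)

theory Defs
  imports "HOL-Analysis.Analysis"
begin

text \<open>Standard Gaussian N(0, I_n) on R^n, with R^n rendered as real^'n (n = CARD('n)):
  the measure with density (2 pi)^(-n/2) exp(-|x|^2/2) w.r.t. Lebesgue measure.\<close>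
definition std_gaussian :: "(real^'n) measure" where
  "std_gaussian = density lborel
     (\<lambda>x. ennreal ((2 * pi) powr (- real CARD('n) / 2) * exp (- (norm x)\<^sup>2 / 2)))"

definition slab :: "real \<Rightarrow> real^'n \<Rightarrow> real^'n \<Rightarrow> real" where
  "slab d z x = (if - d \<le> z \<bullet> x \<and> z \<bullet> x \<le> d then 1 else 0)"

end

theory Submission
  imports Defs "HOL-Probability.Probability"
begin

text \<open>For unit vectors \<open>z, z'\<close> with \<open>e = \<parallel>z - z'\<parallel>\<close>, the projections \<open>z \<bullet> x\<close> and \<open>z' \<bullet> x\<close> differ
  by \<open>e \<bar>w \<bullet> x\<bar>\<close> with \<open>w\<close> a unit vector. The two slabs can only disagree at \<open>x\<close> if either
  \<open>\<bar>w \<bullet> x\<bar> > T\<close>, which has Gaussian probability at most \<open>2 exp(-T\<^sup>2/2)\<close> (Chernoff), or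
  \<open>z \<bullet> x\<close> lies within \<open>e T\<close> of one of \<open>\<plusminus>d\<close>, which has probability at most
  \<open>4 e T / sqrt(2\<pi>)\<close> since the standard normal density is bounded by \<open>1 / sqrt(2\<pi>)\<close>.
  Both estimates only involve marginals \<open>u \<bullet> x\<close> with \<open>u\<close> a unit vector; these are standard
  normal because the Gaussian density factorises over coordinates, which makes the
  characteristic function of \<open>u \<bullet> x\<close> equal to \<open>exp(-t\<^sup>2/2)\<close>. Choosing \<open>T = sqrt(2 ln(1/e))\<close>
  gives \<open>2e + 4e sqrt(ln(1/e)/\<pi>) \<le> 5e sqrt(ln(1/e))\<close>.\<close>

lemma integral_lborel_prod:
  fixes f :: "'a::euclidean_space \<Rightarrow> real \<Rightarrow> 'b::{real_normed_field,banach,second_countable_topology}"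
  assumes "\<And>b. b \<in> Basis \<Longrightarrow> integrable lborel (f b)"
  shows "(\<integral>x. (\<Prod>b\<in>Basis. f b (x \<bullet> b)) \<partial>lborel) = (\<Prod>b\<in>Basis. (\<integral>x. f b x \<partial>lborel))"
proof -
  interpret product_sigma_finite "\<lambda>_. lborel :: real measure" by standard
  have [measurable]: "\<And>b. b \<in> Basis \<Longrightarrow> f b \<in> borel_measurable borel"
    using assms by auto
  have "(\<integral>x. (\<Prod>b\<in>Basis. f b (x \<bullet> b)) \<partial>lborel) =
     (\<integral>g. (\<Prod>b\<in>Basis. f b ((\<Sum>c\<in>Basis. g c *\<^sub>R c) \<bullet> b)) \<partial>(\<Pi>\<^sub>M b\<in>Basis. lborel))"
    by (subst lborel_eq) (rule integral_distr; measurable)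
  also have "\<dots> = (\<integral>g. (\<Prod>b\<in>Basis. f b (g b)) \<partial>(\<Pi>\<^sub>M b\<in>Basis. lborel))"
    by (intro Bochner_Integration.integral_cong refl prod.cong)
       (auto simp: inner_sum_left inner_Basis if_distrib cong: if_cong)
  also have "\<dots> = (\<Prod>b\<in>Basis. (\<integral>x. f b x \<partial>lborel))"
    by (rule product_integral_prod) (auto intro: assms)
  finally show ?thesis .
qed

lemma gaussian_density_eq_prod:
  fixes x :: "'a::euclidean_space"
  shows "(2 * pi) powr (- real DIM('a) / 2) * exp (- (norm x)\<^sup>2 / 2)
       = (\<Prod>b\<in>Basis. std_normal_density (x \<bullet> b))"
proof -
  have "(norm x)\<^sup>2 = (\<Sum>b\<in>Basis. (x \<bullet> b)\<^sup>2)"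
    unfolding power2_norm_eq_inner by (subst euclidean_inner) (simp add: power2_eq_square)
  then have "exp (- (norm x)\<^sup>2 / 2) = (\<Prod>b\<in>Basis. exp (- (x \<bullet> b)\<^sup>2 / 2))"
    by (simp add: exp_sum[symmetric] sum_negf sum_divide_distrib)
  moreover have "1 / sqrt (2 * pi) = (2 * pi) powr (- 1 / 2)"
    by (simp add: powr_minus_divide powr_half_sqrt)
  moreover have "((2 * pi) powr (- 1 / 2)) ^ DIM('a) = (2 * pi) powr (- real DIM('a) / 2)"
    by (subst powr_realpow[symmetric]) (simp_all add: powr_powr)
  ultimately show ?thesis
    by (simp add: std_normal_density_def prod.distrib)
qed

lemma std_gaussian_eq_density_prod:
  "(std_gaussian :: (real^'n) measure) =
     density lborel (\<lambda>x. ennreal (\<Prod>b\<in>Basis. std_normal_density (x \<bullet> b)))"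
  using gaussian_density_eq_prod[where 'a="real^'n"] by (simp add: std_gaussian_def)

lemma sets_std_gaussian [measurable_cong]: "sets std_gaussian = sets borel"
  by (simp add: std_gaussian_def)

lemma prob_space_std_gaussian: "prob_space (std_gaussian :: (real^'n) measure)"
proof
  have "emeasure (std_gaussian :: (real^'n) measure) (space std_gaussian)
     = (\<integral>\<^sup>+x. (\<Prod>b\<in>Basis. ennreal (std_normal_density (x \<bullet> b))) \<partial>(lborel :: (real^'n) measure))"
    unfolding std_gaussian_eq_density_prod by (simp add: emeasure_density prod_ennreal)
  also have "\<dots> = (\<Prod>b\<in>(Basis :: (real^'n) set). (\<integral>\<^sup>+t. ennreal (std_normal_density t) \<partial>lborel))"
    by (rule nn_integral_lborel_prod) auto
  also have "\<dots> = 1"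
    by (simp add: nn_integral_eq_integral)
  finally show "emeasure (std_gaussian :: (real^'n) measure) (space std_gaussian) = 1" .
qed

lemma integrable_std_normal_density_iexp:
  "integrable lborel (\<lambda>s. std_normal_density s *\<^sub>R iexp (c * s))"
proof -
  interpret real_distribution std_normal_distribution by (rule real_dist_normal_dist)
  have "integrable std_normal_distribution (\<lambda>s. iexp (c * s))"
    by (rule integrable_iexp) auto
  then show ?thesis
    by (subst (asm) integrable_density) auto
qed

lemma integral_std_normal_density_iexp:
  "(CLINT s|lborel. std_normal_density s *\<^sub>R iexp (c * s)) = complex_of_real (exp (- c\<^sup>2 / 2))"
proof -
  have "char std_normal_distribution c = (CLINT s|lborel. std_normal_density s *\<^sub>R iexp (c * s))"
    unfolding char_def by (subst integral_density) auto
  then show ?thesis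
    by (simp add: char_std_normal_distribution)
qed

lemma char_distr_inner_std_gaussian:
  fixes u :: "real^'n"
  assumes "norm u = 1"
  shows "char (distr std_gaussian borel (\<lambda>x. u \<bullet> x)) t = complex_of_real (exp (- t\<^sup>2 / 2))"
proof -
  have iexp_inner: "iexp (t * (u \<bullet> x)) = (\<Prod>b\<in>Basis. iexp ((t * (u \<bullet> b)) * (x \<bullet> b)))" for x
    by (simp add: euclidean_inner[of u x] sum_distrib_left mult.assoc exp_sum)
  have "(\<Sum>b\<in>(Basis :: (real^'n) set). (u \<bullet> b)\<^sup>2) = 1"
    using assms by (simp add: norm_eq_sqrt_inner euclidean_inner[of u u] power2_eq_square)
  then have exp_sum_squares: "(\<Prod>b\<in>(Basis :: (real^'n) set). exp (- (t * (u \<bullet> b))\<^sup>2 / 2)) = exp (- t\<^sup>2 / 2)"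
    by (simp add: exp_sum[symmetric] power_mult_distrib sum_negf
        sum_divide_distrib[symmetric] sum_distrib_left[symmetric])
  have "char (distr std_gaussian borel (\<lambda>x. u \<bullet> x)) t
       = (CLINT x|lborel. (\<Prod>b\<in>Basis. std_normal_density (x \<bullet> b)) *\<^sub>R iexp (t * (u \<bullet> x)))"
    unfolding char_def std_gaussian_eq_density_prod
    by (subst integral_distr) (auto simp: integral_density prod_nonneg)
  also have "\<dots> = (CLINT x|lborel.
      (\<Prod>b\<in>Basis. std_normal_density (x \<bullet> b) *\<^sub>R iexp ((t * (u \<bullet> b)) * (x \<bullet> b))))"
    unfolding iexp_inner by (simp add: scaleR_conv_of_real prod.distrib)
  also have "\<dots> = (\<Prod>b\<in>Basis. (CLINT s|lborel. std_normal_density s *\<^sub>R iexp ((t * (u \<bullet> b)) * s)))"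
    by (rule integral_lborel_prod) (rule integrable_std_normal_density_iexp)
  also have "\<dots> = (\<Prod>b\<in>Basis. complex_of_real (exp (- (t * (u \<bullet> b))\<^sup>2 / 2)))"
    by (simp only: integral_std_normal_density_iexp)
  also have "\<dots> = complex_of_real (exp (- t\<^sup>2 / 2))"
    by (simp only: exp_sum_squares flip: of_real_prod)
  finally show ?thesis .
qed

lemma distr_inner_std_gaussian:
  fixes u :: "real^'n"
  assumes "norm u = 1"
  shows "distr std_gaussian borel (\<lambda>x. u \<bullet> x) = std_normal_distribution"
proof (rule Levy_uniqueness)
  interpret prob_space "std_gaussian :: (real^'n) measure" by (rule prob_space_std_gaussian)
  show "real_distribution (distr std_gaussian borel (\<lambda>x. u \<bullet> x))"
    by (rule real_distribution_distr) simp
  show "real_distribution std_normal_distribution" by (rule real_dist_normal_dist)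
  show "char (distr std_gaussian borel (\<lambda>x. u \<bullet> x)) = char std_normal_distribution"
    using char_distr_inner_std_gaussian[OF assms] by (simp add: fun_eq_iff char_std_normal_distribution)
qed

lemma measure_std_gaussian_inner:
  fixes u :: "real^'n"
  assumes "norm u = 1" and [measurable]: "S \<in> sets borel"
  shows "measure std_gaussian {x. u \<bullet> x \<in> S} = measure std_normal_distribution S"
proof -
  have "measure std_normal_distribution S = measure std_gaussian ((\<lambda>x. u \<bullet> x) -` S \<inter> space std_gaussian)"
    unfolding distr_inner_std_gaussian[OF assms(1), symmetric] by (rule measure_distr) auto
  then show ?thesis
    by (simp add: vimage_def std_gaussian_def)
qed

text \<open>Chernoff bound, for both tails at once via the sign of \<open>c\<close>: on the set
  \<open>exp(c t - c\<^sup>2) \<ge> 1\<close>, and the tilted density \<open>\<phi>(t) exp(c t - c\<^sup>2)\<close> is \<open>exp(-c\<^sup>2/2)\<close>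
  times the density of \<open>N(c, 1)\<close>.\<close>
lemma emeasure_std_normal_tilted_tail:
  "emeasure std_normal_distribution {t. c\<^sup>2 < c * t} \<le> ennreal (exp (- c\<^sup>2 / 2))"
proof -
  have tilt: "std_normal_density t * exp (c * t - c\<^sup>2) = exp (- c\<^sup>2 / 2) * normal_density c 1 t" for t
  proof -
    have "- t\<^sup>2 / 2 + (c * t - c\<^sup>2) = - c\<^sup>2 / 2 + - (t - c)\<^sup>2 / 2"
      by (simp add: power2_eq_square field_simps)
    then have "exp (- t\<^sup>2 / 2) * exp (c * t - c\<^sup>2) = exp (- c\<^sup>2 / 2) * exp (- (t - c)\<^sup>2 / 2)"
      by (simp add: exp_add[symmetric])
    then show ?thesis
      unfolding std_normal_density_def normal_density_def by simp
  qed
  have "emeasure std_normal_distribution {t. c\<^sup>2 < c * t}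
      = (\<integral>\<^sup>+t. ennreal (std_normal_density t) * indicator {t. c\<^sup>2 < c * t} t \<partial>lborel)"
    by (subst emeasure_density) auto
  also have "\<dots> \<le> (\<integral>\<^sup>+t. ennreal (exp (- c\<^sup>2 / 2)) * ennreal (normal_density c 1 t) \<partial>lborel)"
  proof (intro nn_integral_mono)
    fix t
    show "ennreal (std_normal_density t) * indicator {t. c\<^sup>2 < c * t} t
        \<le> ennreal (exp (- c\<^sup>2 / 2)) * ennreal (normal_density c 1 t)"
    proof (cases "c\<^sup>2 < c * t")
      case True
      then have "1 \<le> exp (c * t - c\<^sup>2)"
        by simp
      then have "std_normal_density t \<le> std_normal_density t * exp (c * t - c\<^sup>2)"
        using mult_left_mono[OF _ normal_density_nonneg[of 0 1 t], of 1] by simp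
      then show ?thesis
        using True by (simp add: tilt ennreal_mult[symmetric] ennreal_leI)
    qed simp
  qed
  also have "\<dots> = ennreal (exp (- c\<^sup>2 / 2))"
    by (simp add: nn_integral_cmult nn_integral_eq_integral)
  finally show ?thesis .
qed

lemma measure_std_normal_abs_gt:
  assumes "0 < c"
  shows "measure std_normal_distribution {t. c < \<bar>t\<bar>} \<le> 2 * exp (- c\<^sup>2 / 2)"
proof -
  interpret real_distribution std_normal_distribution by (rule real_dist_normal_dist)
  have tail: "measure std_normal_distribution {t. a\<^sup>2 < a * t} \<le> exp (- a\<^sup>2 / 2)" for a
    using emeasure_std_normal_tilted_tail[of a] by (simp add: emeasure_eq_measure)
  have "c < \<bar>t\<bar> \<longleftrightarrow> c * c < c * t \<or> c * c < c * (- t)" for t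
    using assms by (simp only: mult_less_cancel_left_pos) linarith
  then have "{t. c < \<bar>t\<bar>} = {t. c\<^sup>2 < c * t} \<union> {t. (- c)\<^sup>2 < (- c) * t}"
    by (auto simp: power2_eq_square)
  then have "measure std_normal_distribution {t. c < \<bar>t\<bar>}
      \<le> measure std_normal_distribution {t. c\<^sup>2 < c * t}
        + measure std_normal_distribution {t. (- c)\<^sup>2 < (- c) * t}"
    by (simp add: measure_Un_le)
  then show ?thesis
    using tail[of c] tail[of "- c"] by simp
qed

lemma measure_std_normal_Icc_le:
  assumes "a \<le> b"
  shows "measure std_normal_distribution {a..b} \<le> (b - a) / sqrt (2 * pi)"
proof -
  interpret real_distribution std_normal_distribution by (rule real_dist_normal_dist)
  have "emeasure std_normal_distribution {a..b}
      = (\<integral>\<^sup>+t. ennreal (std_normal_density t) * indicator {a..b} t \<partial>lborel)"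
    by (subst emeasure_density) auto
  also have "\<dots> \<le> (\<integral>\<^sup>+t. ennreal (1 / sqrt (2 * pi)) * indicator {a..b} t \<partial>lborel)"
    by (intro nn_integral_mono mult_right_mono ennreal_leI)
       (auto simp: std_normal_density_def divide_le_cancel)
  also have "\<dots> = ennreal ((b - a) / sqrt (2 * pi))"
    using assms by (simp add: nn_integral_cmult_indicator ennreal_mult[symmetric])
  finally show ?thesis
    using assms by (simp add: emeasure_eq_measure ennreal_le_iff)
qed

lemma slab_disagreement_subset:
  fixes z z' w :: "real^'n"
  assumes "\<And>x. z \<bullet> x - z' \<bullet> x = e * (w \<bullet> x)" and "0 \<le> e"
  shows "{x. slab d z x \<noteq> slab d z' x}
           \<subseteq> {x. w \<bullet> x \<in> {t. T < \<bar>t\<bar>}} \<union> {x. z \<bullet> x \<in> {d - e * T .. d + e * T}}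
             \<union> {x. z \<bullet> x \<in> {- d - e * T .. - d + e * T}}"
proof
  fix x assume "x \<in> {x. slab d z x \<noteq> slab d z' x}"
  moreover have "\<bar>z \<bullet> x - z' \<bullet> x\<bar> \<le> e * T" if "\<bar>w \<bullet> x\<bar> \<le> T"
    using assms mult_left_mono[OF that \<open>0 \<le> e\<close>] by (simp add: abs_mult)
  ultimately show "x \<in> {x. w \<bullet> x \<in> {t. T < \<bar>t\<bar>}} \<union> {x. z \<bullet> x \<in> {d - e * T .. d + e * T}}
             \<union> {x. z \<bullet> x \<in> {- d - e * T .. - d + e * T}}"
    by (auto simp: slab_def split: if_splits)
qed

lemma measure_slab_disagreement_le:
  fixes z z' :: "real^'n"
  assumes "norm z = 1" and "norm z' = 1" and "0 < T"
  shows "measure std_gaussian {x. slab d z x \<noteq> slab d z' x}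
           \<le> 2 * exp (- T\<^sup>2 / 2) + 4 * norm (z - z') * T / sqrt (2 * pi)"
proof (cases "z = z'")
  case True
  then show ?thesis using assms by simp
next
  case False
  interpret prob_space "std_gaussian :: (real^'n) measure" by (rule prob_space_std_gaussian)
  define e where "e = norm (z - z')"
  define w where "w = (1 / e) *\<^sub>R (z - z')"
  have "0 < e" using False by (simp add: e_def)
  have "norm w = 1" "\<And>x. z \<bullet> x - z' \<bullet> x = e * (w \<bullet> x)"
    using \<open>0 < e\<close> by (simp_all add: w_def e_def inner_diff_left)
  define A where "A = {x :: real^'n. w \<bullet> x \<in> {t. T < \<bar>t\<bar>}}"
  define B where "B = {x :: real^'n. z \<bullet> x \<in> {d - e * T .. d + e * T}}"
  define B' where "B' = {x :: real^'n. z \<bullet> x \<in> {- d - e * T .. - d + e * T}}"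
  have [simp]: "A \<in> sets std_gaussian" "B \<in> sets std_gaussian" "B' \<in> sets std_gaussian"
    by (simp_all add: A_def B_def B'_def sets_std_gaussian)
  have "measure std_gaussian {x. slab d z x \<noteq> slab d z' x} \<le> measure std_gaussian (A \<union> B \<union> B')"
    using slab_disagreement_subset[OF \<open>\<And>x. z \<bullet> x - z' \<bullet> x = e * (w \<bullet> x)\<close>] \<open>0 < e\<close>
    unfolding A_def B_def B'_def by (intro finite_measure_mono sets.Un) simp_all
  also have "\<dots> \<le> measure std_gaussian A + measure std_gaussian B + measure std_gaussian B'"
    using measure_Un_le[of "A \<union> B" std_gaussian B', OF sets.Un] measure_Un_le[of A std_gaussian B] by simp
  also have "\<dots> \<le> 2 * exp (- T\<^sup>2 / 2) + 2 * e * T / sqrt (2 * pi) + 2 * e * T / sqrt (2 * pi)"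
  proof (intro add_mono)
    show "measure std_gaussian A \<le> 2 * exp (- T\<^sup>2 / 2)"
      unfolding A_def using measure_std_normal_abs_gt[OF \<open>0 < T\<close>]
      by (subst measure_std_gaussian_inner[OF \<open>norm w = 1\<close>]) auto
    show "measure std_gaussian B \<le> 2 * e * T / sqrt (2 * pi)"
      unfolding B_def using measure_std_normal_Icc_le[of "d - e * T" "d + e * T"] \<open>0 < e\<close> \<open>0 < T\<close>
      by (subst measure_std_gaussian_inner[OF \<open>norm z = 1\<close>]) (auto simp: ac_simps)
    show "measure std_gaussian B' \<le> 2 * e * T / sqrt (2 * pi)"
      unfolding B'_def using measure_std_normal_Icc_le[of "- d - e * T" "- d + e * T"] \<open>0 < e\<close> \<open>0 < T\<close>
      by (subst measure_std_gaussian_inner[OF \<open>norm z = 1\<close>]) (auto simp: ac_simps)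
  qed
  finally show ?thesis
    by (simp add: e_def add_divide_distrib[symmetric] ac_simps)
qed

lemma one_le_ln_inverse:
  fixes e :: real
  assumes "0 < e" and "e \<le> 1/3"
  shows "1 \<le> ln (1 / e)"
proof -
  have "e * exp 1 \<le> e * 3"
    using exp_le assms(1) by (intro mult_left_mono) auto
  then have "e * exp 1 \<le> 1"
    using assms(2) by linarith
  then have "exp 1 \<le> 1 / e"
    using assms by (simp add: field_simps)
  then show ?thesis
    using assms(1) by (simp add: ln_ge_iff)
qed

lemma two_add_four_sqrt_div_sqrt_two_pi_le:
  fixes L :: real
  assumes "1 \<le> L"
  shows "2 + 4 * sqrt (2 * L) / sqrt (2 * pi) \<le> 5 * sqrt L"
proof -
  have "4 / 3 \<le> sqrt pi"
    using pi_gt3 by (intro real_le_rsqrt) (simp add: power2_eq_square)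
  then have "4 * sqrt (2 * L) / sqrt (2 * pi) \<le> 3 * sqrt L"
    using assms by (simp add: real_sqrt_mult field_simps)
  moreover have "1 \<le> sqrt L"
    using assms by simp
  ultimately show ?thesis
    by linarith
qed

theorem claim6p4:
  fixes d :: real and z z' :: "real^'n"
  assumes "d \<ge> 0"
    and "norm z = 1" and "norm z' = 1"
    and "0 < norm (z - z')" and "norm (z - z') \<le> 1/3"
  shows "measure std_gaussian {x. slab d z x \<noteq> slab d z' x}
           \<le> 5 * norm (z - z') * sqrt (ln (1 / norm (z - z')))"
proof -
  define e where "e = norm (z - z')"
  define L where "L = ln (1 / e)"
  have "0 < e" and "1 \<le> L"
    using assms one_le_ln_inverse by (simp_all add: e_def L_def)
  have "exp (- (sqrt (2 * L))\<^sup>2 / 2) = exp (- L)"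
    using \<open>1 \<le> L\<close> by simp
  also have "\<dots> = e"
    using \<open>0 < e\<close> by (simp add: L_def exp_minus)
  finally have "measure std_gaussian {x. slab d z x \<noteq> slab d z' x}
      \<le> e * (2 + 4 * sqrt (2 * L) / sqrt (2 * pi))"
    using measure_slab_disagreement_le[OF assms(2,3), of "sqrt (2 * L)" d] \<open>1 \<le> L\<close>
    by (simp add: e_def algebra_simps)
  also have "\<dots> \<le> e * (5 * sqrt L)"
    using two_add_four_sqrt_div_sqrt_two_pi_le[OF \<open>1 \<le> L\<close>] \<open>0 < e\<close> by simp
  finally show ?thesis
    by (simp add: e_def L_def mult.assoc)
qed

end
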